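(* Let $\Theta$ be a variety of algebras and let $H\in\Theta$ be a finitely generated algebra that contains no proper subalgebra isomorphic to $H$. Then every algebra $G\in\Theta$ isotyped to $H$ is isomorphic to $H$.
   Context: $X^0=\{x_1,x_2,\dots\}$ is an infinite set of variables; for finite $X\subset X^0$, $W(X)$ is the free $\Theta$-algebra on $X$; homomorphisms $W(X)\to H$ are points. For each finite $X$, the set $\Phi(X)$ of formulas of sort $X$ is defined inductively: equalities $w\equiv w'$ ($w,w'\in W(X)$) are in $\Phi(X)$; $\Phi(X)$ is closed under $\neg,\vee,\wedge$ and $\exists x$ for $x\in X$; and for each homomorphism $s:W(X)\to W(Y)$ and $u\in\Phi(X)$, $s_*u\in\Phi(Y)$. Values $Val^X_H(u)\subseteq\mathrm{Hom}(W(X),H)$: $Val^X_H(w\equiv w')=\{\mu:\mu(w)=\mu(w')\}$; $\mu\in Val^X_H(\exists x\,u)$ iff some point $\nu$ agreeing with $\mu$ on $X\setminus\{x\}$ lies in $Val^X_H(u)$; $\vee,\wedge,\neg$ are union, intersection, complement; $\mu\in Val^Y_H(s_*u)$ iff $\mu\circ s\in Val^X_H(u)$. The logical kernel of $\mu:W(X)\to H$ is $LKer(\mu)=\{u\in\Phi(X):\mu\in Val^X_H(u)\}$; a set $T\subseteq\Phi(X)$ is an $X$-type of $H$ if $T=LKer(\mu)$ for some point $\mu:W(X)\to H$. Algebras $H_1,H_2\in\Theta$ are isotyped if for every finite $X\subset X^0$, every $X$-type of $H_1$ is an $X$-type of $H_2$ and vice versa. *)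

theory Defs
  imports "HOL-Library.FuncSet"
begin

text \<open>A signature is given by an arity function ar :: 'f => nat.
  Variables are X0 = nat (x_i corresponds to i).\<close>

datatype 'f trm = Var nat | App 'f "'f trm list"

record ('f, 'a) alg =
  acarrier :: "'a set"
  aops :: "'f \<Rightarrow> 'a list \<Rightarrow> 'a"

fun eval :: "('f, 'a) alg \<Rightarrow> (nat \<Rightarrow> 'a) \<Rightarrow> 'f trm \<Rightarrow> 'a" where
  "eval A \<mu> (Var v) = \<mu> v"
| "eval A \<mu> (App f ts) = aops A f (map (eval A \<mu>) ts)"

fun wf_term :: "('f \<Rightarrow> nat) \<Rightarrow> nat set \<Rightarrow> 'f trm \<Rightarrow> bool" where
  "wf_term ar X (Var v) = (v \<in> X)"
| "wf_term ar X (App f ts) = (length ts = ar f \<and> list_all (wf_term ar X) ts)"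

definition is_alg :: "('f \<Rightarrow> nat) \<Rightarrow> ('f, 'a) alg \<Rightarrow> bool" where
  "is_alg ar A \<longleftrightarrow> (\<forall>f as. length as = ar f \<and> set as \<subseteq> acarrier A \<longrightarrow> aops A f as \<in> acarrier A)"

definition satisfies :: "('f, 'a) alg \<Rightarrow> ('f trm \<times> 'f trm) set \<Rightarrow> bool" where
  "satisfies A E \<longleftrightarrow> (\<forall>(l, r) \<in> E. \<forall>\<mu>. (\<forall>v. \<mu> v \<in> acarrier A) \<longrightarrow> eval A \<mu> l = eval A \<mu> r)"

text \<open>A variety (Birkhoff: equational class) is given by a set of identities E.\<close>
definition variety :: "('f \<Rightarrow> nat) \<Rightarrow> ('f trm \<times> 'f trm) set \<Rightarrow> bool" where
  "variety ar E \<longleftrightarrow> (\<forall>(l, r) \<in> E. wf_term ar UNIV l \<and> wf_term ar UNIV r)"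

definition in_variety :: "('f \<Rightarrow> nat) \<Rightarrow> ('f trm \<times> 'f trm) set \<Rightarrow> ('f, 'a) alg \<Rightarrow> bool" where
  "in_variety ar E A \<longleftrightarrow> is_alg ar A \<and> satisfies A E"

definition is_hom :: "('f \<Rightarrow> nat) \<Rightarrow> ('f, 'a) alg \<Rightarrow> ('f, 'b) alg \<Rightarrow> ('a \<Rightarrow> 'b) \<Rightarrow> bool" where
  "is_hom ar A B h \<longleftrightarrow> (\<forall>x \<in> acarrier A. h x \<in> acarrier B) \<and>
     (\<forall>f as. length as = ar f \<and> set as \<subseteq> acarrier A \<longrightarrow> h (aops A f as) = aops B f (map h as))"

definition isomorphic :: "('f \<Rightarrow> nat) \<Rightarrow> ('f, 'a) alg \<Rightarrow> ('f, 'b) alg \<Rightarrow> bool" where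
  "isomorphic ar A B \<longleftrightarrow> (\<exists>h. is_hom ar A B h \<and> bij_betw h (acarrier A) (acarrier B))"

definition subalg :: "('f \<Rightarrow> nat) \<Rightarrow> 'a set \<Rightarrow> ('f, 'a) alg \<Rightarrow> bool" where
  "subalg ar S A \<longleftrightarrow> S \<subseteq> acarrier A \<and> (\<forall>f as. length as = ar f \<and> set as \<subseteq> S \<longrightarrow> aops A f as \<in> S)"

definition no_proper_iso_subalg :: "('f \<Rightarrow> nat) \<Rightarrow> ('f, 'a) alg \<Rightarrow> bool" where
  "no_proper_iso_subalg ar A \<longleftrightarrow>
     (\<forall>S. subalg ar S A \<and> S \<noteq> acarrier A \<longrightarrow> \<not> isomorphic ar (A\<lparr>acarrier := S\<rparr>) A)"

inductive_set generated :: "('f \<Rightarrow> nat) \<Rightarrow> ('f, 'a) alg \<Rightarrow> 'a set \<Rightarrow> 'a set"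
  for ar A S where
  gen_base: "x \<in> S \<Longrightarrow> x \<in> generated ar A S"
| gen_op: "length as = ar f \<Longrightarrow> \<forall>a \<in> set as. a \<in> generated ar A S \<Longrightarrow> aops A f as \<in> generated ar A S"

definition fin_generated :: "('f \<Rightarrow> nat) \<Rightarrow> ('f, 'a) alg \<Rightarrow> bool" where
  "fin_generated ar A \<longleftrightarrow> (\<exists>S. finite S \<and> S \<subseteq> acarrier A \<and> generated ar A S = acarrier A)"

text \<open>Sub X s u stands for s_* u, where s : W(X) -> W(Y) is the homomorphism
  determined by the substitution x |-> s x (x in X) of terms over Y.\<close>
datatype 'f form =
    Eq "'f trm" "'f trm"
  | Neg "'f form"
  | Disj "'f form" "'f form"
  | Conj "'f form" "'f form"
  | Ex nat "'f form"
  | Sub "nat set" "nat \<Rightarrow> 'f trm" "'f form"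

inductive wf_form :: "('f \<Rightarrow> nat) \<Rightarrow> nat set \<Rightarrow> 'f form \<Rightarrow> bool" for ar where
  wf_Eq: "finite X \<Longrightarrow> wf_term ar X w \<Longrightarrow> wf_term ar X w' \<Longrightarrow> wf_form ar X (Eq w w')"
| wf_Neg: "wf_form ar X u \<Longrightarrow> wf_form ar X (Neg u)"
| wf_Disj: "wf_form ar X u \<Longrightarrow> wf_form ar X v \<Longrightarrow> wf_form ar X (Disj u v)"
| wf_Conj: "wf_form ar X u \<Longrightarrow> wf_form ar X v \<Longrightarrow> wf_form ar X (Conj u v)"
| wf_Ex: "wf_form ar X u \<Longrightarrow> x \<in> X \<Longrightarrow> wf_form ar X (Ex x u)"
| wf_Sub: "wf_form ar X u \<Longrightarrow> finite Y \<Longrightarrow> (\<forall>x \<in> X. wf_term ar Y (s x))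
            \<Longrightarrow> wf_form ar Y (Sub X s u)"

text \<open>Truth of a formula at a point (points W(X) -> A are identified with
  assignments of the free generators, by freeness of W(X)).\<close>
primrec sat :: "('f, 'a) alg \<Rightarrow> (nat \<Rightarrow> 'a) \<Rightarrow> 'f form \<Rightarrow> bool" where
  "sat A \<mu> (Eq w w') = (eval A \<mu> w = eval A \<mu> w')"
| "sat A \<mu> (Neg u) = (\<not> sat A \<mu> u)"
| "sat A \<mu> (Disj u v) = (sat A \<mu> u \<or> sat A \<mu> v)"
| "sat A \<mu> (Conj u v) = (sat A \<mu> u \<and> sat A \<mu> v)"
| "sat A \<mu> (Ex x u) = (\<exists>a \<in> acarrier A. sat A (\<mu>(x := a)) u)"
| "sat A \<mu> (Sub X s u) = sat A (\<lambda>v. eval A \<mu> (s v)) u"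

definition LKer :: "('f \<Rightarrow> nat) \<Rightarrow> nat set \<Rightarrow> ('f, 'a) alg \<Rightarrow> (nat \<Rightarrow> 'a) \<Rightarrow> 'f form set" where
  "LKer ar X A \<mu> = {u. wf_form ar X u \<and> sat A \<mu> u}"

definition xtypes :: "('f \<Rightarrow> nat) \<Rightarrow> nat set \<Rightarrow> ('f, 'a) alg \<Rightarrow> 'f form set set" where
  "xtypes ar X A = (\<lambda>\<mu>. LKer ar X A \<mu>) ` (X \<rightarrow>\<^sub>E acarrier A)"

definition isotyped :: "('f \<Rightarrow> nat) \<Rightarrow> ('f, 'a) alg \<Rightarrow> ('f, 'b) alg \<Rightarrow> bool" where
  "isotyped ar A B \<longleftrightarrow> (\<forall>X. finite X \<longrightarrow> xtypes ar X A = xtypes ar X B)"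

end

theory Submission
  imports Defs
begin

text \<open>Let \<open>\<mu>\<close> be a point of \<open>H\<close> on finitely many variables \<open>X\<close> whose image is all of \<open>H\<close>,
  and let \<open>\<nu>\<close> be a point of \<open>G\<close> of the same type.  Equality of types gives equality of kernels,
  so \<open>\<mu>\<close> and \<open>\<nu>\<close> have isomorphic images, and it remains to see that \<open>\<nu>\<close> is onto \<open>G\<close>.
  For \<open>g \<in> G\<close>, adjoin a fresh variable \<open>n\<close> sent to \<open>g\<close>; the type of this point is realised by
  a point \<open>\<mu>''\<close> of \<open>H\<close>.  On \<open>X\<close>, \<open>\<mu>''\<close> has the kernel of \<open>\<mu>\<close>, so its image there is a
  subalgebra of \<open>H\<close> isomorphic to \<open>H\<close>, hence all of \<open>H\<close>.  Thus \<open>\<mu>'' n = \<mu>'' t\<close> for a term \<open>t\<close>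
  over \<open>X\<close>; this equation belongs to the common type, so \<open>g = \<nu> t\<close>.\<close>

definition point_image :: "('f \<Rightarrow> nat) \<Rightarrow> ('f, 'a) alg \<Rightarrow> nat set \<Rightarrow> (nat \<Rightarrow> 'a) \<Rightarrow> 'a set" where
  "point_image ar A X \<mu> = {eval A \<mu> t |t. wf_term ar X t}"

definition point_kernel ::
    "('f \<Rightarrow> nat) \<Rightarrow> ('f, 'a) alg \<Rightarrow> nat set \<Rightarrow> (nat \<Rightarrow> 'a) \<Rightarrow> ('f trm \<times> 'f trm) set" where
  "point_kernel ar A X \<mu> =
     {(t, t'). wf_term ar X t \<and> wf_term ar X t' \<and> eval A \<mu> t = eval A \<mu> t'}"

lemma wf_term_mono: "wf_term ar X t \<Longrightarrow> X \<subseteq> Y \<Longrightarrow> wf_term ar Y t"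
  by (induction ar X t rule: wf_term.induct) (auto simp: list_all_iff)

lemma eval_cong: "wf_term ar X t \<Longrightarrow> \<forall>v\<in>X. \<mu> v = \<mu>' v \<Longrightarrow> eval A \<mu> t = eval A \<mu>' t"
proof (induction ar X t rule: wf_term.induct)
  case (2 ar X f ts)
  then have "map (eval A \<mu>) ts = map (eval A \<mu>') ts"
    by (intro map_cong) (auto simp: list_all_iff)
  then show ?case by (simp only: eval.simps(2))
qed auto

lemma eval_in_carrier:
  "is_alg ar A \<Longrightarrow> wf_term ar X t \<Longrightarrow> \<forall>v\<in>X. \<mu> v \<in> acarrier A \<Longrightarrow> eval A \<mu> t \<in> acarrier A"
proof (induction ar X t rule: wf_term.induct)
  case (2 ar X f ts)
  then have "set (map (eval A \<mu>) ts) \<subseteq> acarrier A" by (auto simp: list_all_iff)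
  with 2 show ?case unfolding is_alg_def by (simp add: list_all_iff)
qed auto

lemma point_imageI: "wf_term ar X t \<Longrightarrow> eval A \<mu> t \<in> point_image ar A X \<mu>"
  unfolding point_image_def by blast

lemma point_imageE:
  assumes "a \<in> point_image ar A X \<mu>"
  obtains t where "wf_term ar X t" "eval A \<mu> t = a"
  using assms unfolding point_image_def by blast

lemma point_image_cong:
  assumes "\<forall>v\<in>X. \<mu> v = \<mu>' v"
  shows "point_image ar A X \<mu> = point_image ar A X \<mu>'"
proof -
  have "eval A \<mu> t = eval A \<mu>' t" if "wf_term ar X t" for t
    using eval_cong[OF that assms] .
  then show ?thesis unfolding point_image_def by (metis (no_types, lifting))
qed

lemma point_image_lists:
  assumes "set as \<subseteq> point_image ar A X \<mu>"
  obtains ts where "list_all (wf_term ar X) ts" "map (eval A \<mu>) ts = as"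
  using assms
proof (induction as arbitrary: thesis)
  case Nil
  then show ?case by simp
next
  case (Cons a as)
  then obtain t where "wf_term ar X t" "eval A \<mu> t = a" by (auto elim: point_imageE)
  moreover obtain ts where "list_all (wf_term ar X) ts" "map (eval A \<mu>) ts = as"
    using Cons by auto
  ultimately show ?case using Cons.prems(1)[of "t # ts"] by simp
qed

lemma point_image_aops:
  assumes "length as = ar f" "set as \<subseteq> point_image ar A X \<mu>"
  shows "aops A f as \<in> point_image ar A X \<mu>"
proof -
  obtain ts where ts: "list_all (wf_term ar X) ts" "map (eval A \<mu>) ts = as"
    using point_image_lists[OF assms(2)] .
  then have "wf_term ar X (App f ts)" using assms(1) by (metis length_map wf_term.simps(2))
  then show ?thesis using point_imageI[of ar X "App f ts" A \<mu>] ts(2) by simp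
qed

lemma subalg_point_image:
  assumes "is_alg ar A" "\<forall>v\<in>X. \<mu> v \<in> acarrier A"
  shows "subalg ar (point_image ar A X \<mu>) A"
proof -
  have "point_image ar A X \<mu> \<subseteq> acarrier A"
    using eval_in_carrier[OF assms(1) _ assms(2)] unfolding point_image_def by auto
  then show ?thesis unfolding subalg_def by (simp add: point_image_aops)
qed

lemma generated_subset_point_image: "generated ar A (\<mu> ` X) \<subseteq> point_image ar A X \<mu>"
proof
  fix x assume "x \<in> generated ar A (\<mu> ` X)"
  then show "x \<in> point_image ar A X \<mu>"
  proof (induction rule: generated.induct)
    case (gen_base x)
    then obtain v where "v \<in> X" "x = \<mu> v" by auto
    then show ?case using point_imageI[of ar X "Var v" A \<mu>] by simp
  next
    case (gen_op as f)
    then show ?case by (auto intro: point_image_aops)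
  qed
qed

lemma fin_generated_point_image:
  assumes "is_alg ar A" "fin_generated ar A"
  obtains X \<mu> where "finite X" "\<mu> \<in> X \<rightarrow>\<^sub>E acarrier A" "point_image ar A X \<mu> = acarrier A"
proof -
  obtain S where S: "finite S" "S \<subseteq> acarrier A" "generated ar A S = acarrier A"
    using assms(2) unfolding fin_generated_def by auto
  obtain h where h: "bij_betw h {0..<card S} S" using ex_bij_betw_nat_finite[OF S(1)] by auto
  define \<mu> where "\<mu> = restrict h {0..<card S}"
  have image: "\<mu> ` {0..<card S} = S" using h unfolding \<mu>_def bij_betw_def by auto
  then have point: "\<mu> \<in> {0..<card S} \<rightarrow>\<^sub>E acarrier A" using S(2) unfolding \<mu>_def by auto
  have "point_image ar A {0..<card S} \<mu> \<subseteq> acarrier A"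
    using subalg_point_image[OF assms(1)] point unfolding subalg_def by auto
  moreover have "acarrier A \<subseteq> point_image ar A {0..<card S} \<mu>"
    using generated_subset_point_image[of ar A \<mu> "{0..<card S}"] image S(3) by simp
  ultimately show thesis using that[of "{0..<card S}" \<mu>] point by auto
qed

lemma isomorphic_point_images:
  assumes "point_kernel ar A X \<alpha> = point_kernel ar B X \<beta>"
  shows "isomorphic ar (A\<lparr>acarrier := point_image ar A X \<alpha>\<rparr>) (B\<lparr>acarrier := point_image ar B X \<beta>\<rparr>)"
proof -
  have same_eqs: "eval A \<alpha> t = eval A \<alpha> t' \<longleftrightarrow> eval B \<beta> t = eval B \<beta> t'"
    if "wf_term ar X t" "wf_term ar X t'" for t t'
    using assms that unfolding point_kernel_def by blast
  define \<chi> where "\<chi> x = eval B \<beta> (SOME t. wf_term ar X t \<and> eval A \<alpha> t = x)" for x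
  have \<chi>_eval: "\<chi> (eval A \<alpha> t) = eval B \<beta> t" if "wf_term ar X t" for t
  proof -
    have "\<exists>s. wf_term ar X s \<and> eval A \<alpha> s = eval A \<alpha> t" using that by blast
    then show ?thesis unfolding \<chi>_def by (rule someI2_ex) (use same_eqs that in blast)
  qed
  let ?IA = "point_image ar A X \<alpha>" and ?IB = "point_image ar B X \<beta>"
  have "is_hom ar (A\<lparr>acarrier := ?IA\<rparr>) (B\<lparr>acarrier := ?IB\<rparr>) \<chi>"
    unfolding is_hom_def
  proof (intro conjI allI impI ballI)
    show "\<chi> x \<in> acarrier (B\<lparr>acarrier := ?IB\<rparr>)" if "x \<in> acarrier (A\<lparr>acarrier := ?IA\<rparr>)" for x
      using that \<chi>_eval by (auto simp: point_image_def)
  next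
    fix f as assume as: "length as = ar f \<and> set as \<subseteq> acarrier (A\<lparr>acarrier := ?IA\<rparr>)"
    then obtain ts where ts: "list_all (wf_term ar X) ts" "map (eval A \<alpha>) ts = as"
      using point_image_lists[of as ar A X \<alpha>] by auto
    have "wf_term ar X (App f ts)" using ts as by (metis length_map wf_term.simps(2))
    then have "\<chi> (aops A f as) = aops B f (map (eval B \<beta>) ts)"
      using \<chi>_eval[of "App f ts"] ts(2) by simp
    moreover have "map (eval B \<beta>) ts = map \<chi> as"
      using ts \<chi>_eval by (auto simp: list_all_iff)
    ultimately show "\<chi> (aops (A\<lparr>acarrier := ?IA\<rparr>) f as) = aops (B\<lparr>acarrier := ?IB\<rparr>) f (map \<chi> as)"
      by simp
  qed
  moreover have "bij_betw \<chi> ?IA ?IB"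
  proof (rule bij_betw_imageI)
    show "inj_on \<chi> ?IA"
      by (rule inj_onI) (auto simp: point_image_def \<chi>_eval same_eqs)
    show "\<chi> ` ?IA = ?IB"
    proof
      show "\<chi> ` ?IA \<subseteq> ?IB" by (auto simp: point_image_def \<chi>_eval)
      show "?IB \<subseteq> \<chi> ` ?IA"
      proof
        fix y assume "y \<in> ?IB"
        then obtain t where "wf_term ar X t" "y = \<chi> (eval A \<alpha> t)"
          by (auto simp: point_image_def \<chi>_eval)
        then show "y \<in> \<chi> ` ?IA" by (auto simp: point_image_def)
      qed
    qed
  qed
  ultimately show ?thesis unfolding isomorphic_def by auto
qed

lemma point_kernel_eq_if_LKer_eq:
  assumes "finite X" "LKer ar X A \<mu> = LKer ar X B \<nu>"
  shows "point_kernel ar A X \<mu> = point_kernel ar B X \<nu>"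
proof -
  have "eval A \<mu> t = eval A \<mu> t' \<longleftrightarrow> eval B \<nu> t = eval B \<nu> t'"
    if "wf_term ar X t" "wf_term ar X t'" for t t'
  proof -
    have "wf_form ar X (Eq t t')" using assms(1) that by (rule wf_Eq)
    then have "sat A \<mu> (Eq t t') \<longleftrightarrow> sat B \<nu> (Eq t t')"
      using assms(2) unfolding LKer_def by blast
    then show ?thesis by simp
  qed
  then show ?thesis unfolding point_kernel_def by blast
qed

lemma point_kernel_smaller_vars:
  assumes "X \<subseteq> Y"
  shows "point_kernel ar A X \<mu> = point_kernel ar A Y \<mu> \<inter> {(t, t'). wf_term ar X t \<and> wf_term ar X t'}"
  using wf_term_mono[OF _ assms] unfolding point_kernel_def by auto

lemma point_kernel_eq_restrict:
  assumes "X \<subseteq> Y" "point_kernel ar A Y \<mu> = point_kernel ar B Y \<nu>"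
  shows "point_kernel ar A X \<mu> = point_kernel ar B X \<nu>"
  using assms by (simp add: point_kernel_smaller_vars)

lemma point_kernel_cong:
  assumes "\<forall>v\<in>X. \<mu> v = \<mu>' v"
  shows "point_kernel ar A X \<mu> = point_kernel ar A X \<mu>'"
proof -
  have "eval A \<mu> t = eval A \<mu>' t" if "wf_term ar X t" for t
    using eval_cong[OF that assms] .
  then show ?thesis unfolding point_kernel_def by auto
qed

lemma isotyped_sym: "isotyped ar A B \<Longrightarrow> isotyped ar B A"
  unfolding isotyped_def by simp

lemma isotyped_realise_LKer:
  assumes "isotyped ar A B" "finite X" "\<mu> \<in> X \<rightarrow>\<^sub>E acarrier B"
  obtains \<nu> where "\<nu> \<in> X \<rightarrow>\<^sub>E acarrier A" "LKer ar X A \<nu> = LKer ar X B \<mu>"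
proof -
  have "LKer ar X B \<mu> \<in> xtypes ar X A"
    using assms unfolding isotyped_def xtypes_def by auto
  then show thesis using that unfolding xtypes_def by auto
qed

lemma point_image_transfer_var:
  assumes "X \<subseteq> Y" "n \<in> Y" "point_kernel ar A Y \<alpha> = point_kernel ar B Y \<beta>"
    and "\<alpha> n \<in> point_image ar A X \<alpha>"
  shows "\<beta> n \<in> point_image ar B X \<beta>"
proof -
  obtain t where t: "wf_term ar X t" "eval A \<alpha> t = \<alpha> n"
    using assms(4) by (rule point_imageE)
  then have "(Var n, t) \<in> point_kernel ar A Y \<alpha>"
    using assms(2) wf_term_mono[OF t(1) assms(1)] by (auto simp: point_kernel_def)
  then have "(Var n, t) \<in> point_kernel ar B Y \<beta>" using assms(3) by simp
  then have "\<beta> n = eval B \<beta> t" by (simp add: point_kernel_def)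
  then show ?thesis using point_imageI[OF t(1)] by simp
qed

lemma point_image_eq_carrier_if_same_kernel:
  assumes "is_alg ar H" "no_proper_iso_subalg ar H"
    and "point_image ar H X \<mu> = acarrier H"
    and "\<forall>v\<in>X. \<mu>' v \<in> acarrier H"
    and "point_kernel ar H X \<mu>' = point_kernel ar H X \<mu>"
  shows "point_image ar H X \<mu>' = acarrier H"
proof (rule ccontr)
  assume "point_image ar H X \<mu>' \<noteq> acarrier H"
  moreover have "subalg ar (point_image ar H X \<mu>') H"
    using subalg_point_image assms(1,4) .
  ultimately have "\<not> isomorphic ar (H\<lparr>acarrier := point_image ar H X \<mu>'\<rparr>) H"
    using assms(2) unfolding no_proper_iso_subalg_def by blast
  then show False using isomorphic_point_images[OF assms(5)] assms(3) by simp
qed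

lemma isotyped_point_image_eq_carrier:
  assumes isotyped: "isotyped ar G H"
    and H: "is_alg ar H" "no_proper_iso_subalg ar H"
    and G: "is_alg ar G"
    and "finite X" "\<mu> \<in> X \<rightarrow>\<^sub>E acarrier H" "point_image ar H X \<mu> = acarrier H"
    and "\<nu> \<in> X \<rightarrow>\<^sub>E acarrier G" "LKer ar X G \<nu> = LKer ar X H \<mu>"
  shows "point_image ar G X \<nu> = acarrier G"
proof
  show "point_image ar G X \<nu> \<subseteq> acarrier G"
    using subalg_point_image[OF G] assms(8) unfolding subalg_def by (simp add: PiE_iff)
  show "acarrier G \<subseteq> point_image ar G X \<nu>"
  proof
    fix g assume g: "g \<in> acarrier G"
    obtain n where n: "n \<notin> X" using ex_new_if_finite[OF infinite_UNIV_nat \<open>finite X\<close>] by blast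
    define Y where "Y = insert n X"
    define \<nu>' where "\<nu>' = \<nu>(n := g)"
    have "finite Y" "X \<subseteq> Y" using \<open>finite X\<close> by (auto simp: Y_def)
    have \<nu>'_on_X: "\<forall>v\<in>X. \<nu>' v = \<nu> v" using n by (simp add: \<nu>'_def)
    have "\<nu>' \<in> Y \<rightarrow>\<^sub>E acarrier G" using assms(8) g n by (auto simp: \<nu>'_def Y_def PiE_def extensional_def)
    then obtain \<mu>'' where \<mu>'': "\<mu>'' \<in> Y \<rightarrow>\<^sub>E acarrier H" "LKer ar Y H \<mu>'' = LKer ar Y G \<nu>'"
      using isotyped_realise_LKer[OF isotyped_sym[OF isotyped] \<open>finite Y\<close>] by blast
    have kernel_Y: "point_kernel ar H Y \<mu>'' = point_kernel ar G Y \<nu>'"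
      using point_kernel_eq_if_LKer_eq[OF \<open>finite Y\<close> \<mu>''(2)] .
    have "point_kernel ar H X \<mu>'' = point_kernel ar G X \<nu>"
      using point_kernel_eq_restrict[OF \<open>X \<subseteq> Y\<close> kernel_Y] point_kernel_cong[OF \<nu>'_on_X] by simp
    also have "\<dots> = point_kernel ar H X \<mu>"
      using point_kernel_eq_if_LKer_eq[OF \<open>finite X\<close> assms(9)] .
    finally have kernel_X: "point_kernel ar H X \<mu>'' = point_kernel ar H X \<mu>" .
    have "\<forall>v\<in>X. \<mu>'' v \<in> acarrier H" using \<mu>''(1) \<open>X \<subseteq> Y\<close> by auto
    then have "point_image ar H X \<mu>'' = acarrier H"
      using point_image_eq_carrier_if_same_kernel[OF H assms(7) _ kernel_X] by simp
    moreover have "\<mu>'' n \<in> acarrier H" using \<mu>''(1) by (auto simp: Y_def)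
    ultimately have "\<nu>' n \<in> point_image ar G X \<nu>'"
      using point_image_transfer_var[OF \<open>X \<subseteq> Y\<close> _ kernel_Y] by (simp add: Y_def)
    moreover have "\<nu>' n = g" by (simp add: \<nu>'_def)
    ultimately show "g \<in> point_image ar G X \<nu>"
      using point_image_cong[OF \<nu>'_on_X, of ar G] by simp
  qed
qed

theorem mainTheorem7:
  fixes ar :: "'f \<Rightarrow> nat"
    and E :: "('f trm \<times> 'f trm) set"
    and H :: "('f, 'a) alg"
    and G :: "('f, 'b) alg"
  assumes "variety ar E"
    and "in_variety ar E H"
    and "fin_generated ar H"
    and "no_proper_iso_subalg ar H"
    and "in_variety ar E G"
    and "isotyped ar G H"
  shows "isomorphic ar G H"
proof -
  have H: "is_alg ar H" and G: "is_alg ar G"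
    using assms(2,5) unfolding in_variety_def by auto
  obtain X \<mu> where X: "finite X" and \<mu>: "\<mu> \<in> X \<rightarrow>\<^sub>E acarrier H" "point_image ar H X \<mu> = acarrier H"
    using fin_generated_point_image[OF H assms(3)] .
  obtain \<nu> where \<nu>: "\<nu> \<in> X \<rightarrow>\<^sub>E acarrier G" "LKer ar X G \<nu> = LKer ar X H \<mu>"
    using isotyped_realise_LKer[OF assms(6) X \<mu>(1)] .
  have "point_image ar G X \<nu> = acarrier G"
    using isotyped_point_image_eq_carrier[OF assms(6) H assms(4) G X \<mu> \<nu>] .
  moreover have "point_kernel ar G X \<nu> = point_kernel ar H X \<mu>"
    using point_kernel_eq_if_LKer_eq[OF X \<nu>(2)] .
  ultimately show ?thesis
    using isomorphic_point_images[of ar G X \<nu> H \<mu>] \<mu>(2) by simp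
qed

end
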